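(* In the cell FDE setting described in the context, assume (H1), (H2), (H3), and: (H8) there exist $\delta>0$ and $z^*\ge0$ with $q(z)\le-\delta$ for all $z\ge z^*$; (H9) for every $K>0$ there is $L=L(K)$ such that $j(\varphi,\psi)\ge K$ whenever $(\varphi,\psi)\in U_+$ and $\min_{[-h,0]}\varphi\ge L$. Then there exists $K_2$ such that for every $\phi\in X_+$ there is $t_m=t_m(\phi)$ with $w^\phi(t)\le K_2$ for all $t\ge t_m$.
   Context: Let $h>0$, $R_-<0$, $I:=(R_-,\infty)$. $\|\phi\|_0:=\max_{\theta\in[-h,0]}|\phi(\theta)|$, $\|\phi\|_1:=\|\phi\|_0+\|\phi'\|_0$; $x_t(s):=x(t+s)$, $s\in[-h,0]$. Let $U:=C^1([-h,0],\mathbb R)\times C^1([-h,0],I)$, $U_+:=C^1([-h,0],[0,\infty)^2)$, $q:I\to\mathbb R$, $j:U\to\mathbb R$, $\mu\ge0$. Cell FDE: $w'(t)=q(v(t))w(t)$, $v'(t)=j(w_t,v_t)-\mu v(t)$, $t>0$, $(w_0,v_0)=(\varphi,\psi)$. $F(\varphi,\psi):=(q(\psi(0))\varphi(0),j(\varphi,\psi)-\mu\psi(0))$, $X:=\{\phi\in U:\phi'(0)=F(\phi)\}$, $X_+:=X\cap U_+$. Solutions are $C^1$ maps $x=(w,v)$ on $[-h,t_* )$ with $x_0=\phi$, $x_t\in U$, satisfying the equations on $(0,t_* )$. (S): $f$ is $C^1$, each $Df(\phi)$ extends to a linear map on $C([-h,0],\mathbb R^n)$ and $(\phi,\chi)\mapsto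 D_ef(\phi)\chi$ is continuous. (sLb) on $\mathcal O_+$: for each $\|\cdot\|_1$-bounded $B\subset\mathcal O_+$ there is $L_B$ with $|f(\phi)-f(\chi)|\le L_B\|\phi-\chi\|_0$ on $B$. (H1): $j$ satisfies (S) on $U$, (sLb) on $U_+$, $j\ge0$ on $U_+$, and $j(B_1\times B_2)$ is bounded whenever $B_1\times B_2\subset U_+$ with $B_1$ bounded. (H2): $q$ bounded and $C^1$. (H3): $X_+\neq\emptyset$. Under (H1)-(H3) each $\phi\in X_+$ has a unique solution $(w^\phi,v^\phi)$ on $[-h,\infty)$ with segments in $X_+$. *)

theory Defs
  imports "HOL-Analysis.Analysis"
begin

(* Functions on [-h,0] are represented extensionally as maps real => 'a that vanish off [-h,0]. *)

definition pf :: "(real \<Rightarrow> real) \<Rightarrow> (real \<Rightarrow> real) \<Rightarrow> real \<Rightarrow> real \<times> real" where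
  "pf \<phi> \<psi> = (\<lambda>s. (\<phi> s, \<psi> s))"

definition nrm0 :: "real \<Rightarrow> (real \<Rightarrow> 'a::real_normed_vector) \<Rightarrow> real" where
  "nrm0 h f = (SUP s\<in>{-h..0}. norm (f s))"

definition dr :: "real \<Rightarrow> (real \<Rightarrow> 'a::real_normed_vector) \<Rightarrow> real \<Rightarrow> 'a" where
  "dr h f s = vector_derivative f (at s within {-h..0})"

definition nrm1 :: "real \<Rightarrow> (real \<Rightarrow> 'a::real_normed_vector) \<Rightarrow> real" where
  "nrm1 h f = nrm0 h f + nrm0 h (dr h f)"

definition isC0 :: "real \<Rightarrow> (real \<Rightarrow> 'a::real_normed_vector) \<Rightarrow> bool" where
  "isC0 h f \<longleftrightarrow> continuous_on {-h..0} f \<and> (\<forall>s. s \<notin> {-h..0} \<longrightarrow> f s = 0)"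

definition isC1 :: "real \<Rightarrow> (real \<Rightarrow> 'a::real_normed_vector) \<Rightarrow> bool" where
  "isC1 h f \<longleftrightarrow> (\<forall>s\<in>{-h..0}. (f has_vector_derivative dr h f s) (at s within {-h..0}))
      \<and> continuous_on {-h..0} (dr h f) \<and> (\<forall>s. s \<notin> {-h..0} \<longrightarrow> f s = 0)"

definition UU :: "real \<Rightarrow> real \<Rightarrow> ((real \<Rightarrow> real) \<times> (real \<Rightarrow> real)) set" where
  "UU h Rm = {(\<phi>, \<psi>). isC1 h \<phi> \<and> isC1 h \<psi> \<and> (\<forall>s\<in>{-h..0}. Rm < \<psi> s)}"

definition Uplus :: "real \<Rightarrow> ((real \<Rightarrow> real) \<times> (real \<Rightarrow> real)) set" where
  "Uplus h = {(\<phi>, \<psi>). isC1 h \<phi> \<and> isC1 h \<psi> \<and> (\<forall>s\<in>{-h..0}. 0 \<le> \<phi> s \<and> 0 \<le> \<psi> s)}"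

definition FF :: "(real \<Rightarrow> real) \<Rightarrow> ((real \<Rightarrow> real) \<Rightarrow> (real \<Rightarrow> real) \<Rightarrow> real) \<Rightarrow> real
    \<Rightarrow> (real \<Rightarrow> real) \<Rightarrow> (real \<Rightarrow> real) \<Rightarrow> real \<times> real" where
  "FF q j \<mu> \<phi> \<psi> = (q (\<psi> 0) * \<phi> 0, j \<phi> \<psi> - \<mu> * \<psi> 0)"

definition XX where
  "XX h Rm q j \<mu> = {(\<phi>, \<psi>) \<in> UU h Rm. (dr h \<phi> 0, dr h \<psi> 0) = FF q j \<mu> \<phi> \<psi>}"

definition Xplus where
  "Xplus h Rm q j \<mu> = XX h Rm q j \<mu> \<inter> Uplus h"

definition seg :: "real \<Rightarrow> (real \<Rightarrow> real) \<Rightarrow> real \<Rightarrow> real \<Rightarrow> real" where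
  "seg h x t = (\<lambda>s. if s \<in> {-h..0} then x (t + s) else 0)"

text \<open>Condition (S) for j on U, with D_e j(p) represented by De p (defined on C pairs).\<close>
definition condS where
  "condS h Rm j \<longleftrightarrow> (\<exists>De :: (real \<Rightarrow> real) \<Rightarrow> (real \<Rightarrow> real) \<Rightarrow> (real \<Rightarrow> real) \<Rightarrow> (real \<Rightarrow> real) \<Rightarrow> real.
     (\<forall>(\<phi>,\<psi>)\<in>UU h Rm. \<forall>\<xi>1 \<zeta>1 \<xi>2 \<zeta>2 a b. isC0 h \<xi>1 \<and> isC0 h \<zeta>1 \<and> isC0 h \<xi>2 \<and> isC0 h \<zeta>2 \<longrightarrow>
        De \<phi> \<psi> (\<lambda>s. a * \<xi>1 s + b * \<xi>2 s) (\<lambda>s. a * \<zeta>1 s + b * \<zeta>2 s)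
          = a * De \<phi> \<psi> \<xi>1 \<zeta>1 + b * De \<phi> \<psi> \<xi>2 \<zeta>2)
   \<and> (\<forall>(\<phi>,\<psi>)\<in>UU h Rm. \<forall>\<epsilon>>0. \<exists>\<eta>>0. \<forall>(\<phi>',\<psi>')\<in>UU h Rm.
        nrm1 h (pf (\<lambda>s. \<phi>' s - \<phi> s) (\<lambda>s. \<psi>' s - \<psi> s)) < \<eta> \<longrightarrow>
        \<bar>j \<phi>' \<psi>' - j \<phi> \<psi> - De \<phi> \<psi> (\<lambda>s. \<phi>' s - \<phi> s) (\<lambda>s. \<psi>' s - \<psi> s)\<bar>
          \<le> \<epsilon> * nrm1 h (pf (\<lambda>s. \<phi>' s - \<phi> s) (\<lambda>s. \<psi>' s - \<psi> s)))
   \<and> (\<forall>(\<phi>,\<psi>)\<in>UU h Rm. \<forall>\<epsilon>>0. \<exists>\<eta>>0. \<forall>(\<phi>',\<psi>')\<in>UU h Rm.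
        nrm1 h (pf (\<lambda>s. \<phi>' s - \<phi> s) (\<lambda>s. \<psi>' s - \<psi> s)) < \<eta> \<longrightarrow>
        (\<forall>\<xi> \<zeta>. isC1 h \<xi> \<and> isC1 h \<zeta> \<longrightarrow>
           \<bar>De \<phi>' \<psi>' \<xi> \<zeta> - De \<phi> \<psi> \<xi> \<zeta>\<bar> \<le> \<epsilon> * nrm1 h (pf \<xi> \<zeta>)))
   \<and> (\<forall>(\<phi>,\<psi>)\<in>UU h Rm. \<forall>\<xi> \<zeta>. isC0 h \<xi> \<and> isC0 h \<zeta> \<longrightarrow>
        (\<forall>\<epsilon>>0. \<exists>\<eta>>0. \<forall>(\<phi>',\<psi>')\<in>UU h Rm. \<forall>\<xi>' \<zeta>'. isC0 h \<xi>' \<and> isC0 h \<zeta>' \<and>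
           nrm1 h (pf (\<lambda>s. \<phi>' s - \<phi> s) (\<lambda>s. \<psi>' s - \<psi> s)) < \<eta> \<and>
           nrm0 h (pf (\<lambda>s. \<xi>' s - \<xi> s) (\<lambda>s. \<zeta>' s - \<zeta> s)) < \<eta> \<longrightarrow>
           \<bar>De \<phi>' \<psi>' \<xi>' \<zeta>' - De \<phi> \<psi> \<xi> \<zeta>\<bar> < \<epsilon>)))"

definition condsLb where
  "condsLb h j \<longleftrightarrow> (\<forall>B \<subseteq> Uplus h. (\<exists>M. \<forall>(\<phi>,\<psi>)\<in>B. nrm1 h (pf \<phi> \<psi>) \<le> M) \<longrightarrow>
     (\<exists>L. \<forall>(\<phi>,\<psi>)\<in>B. \<forall>(\<phi>',\<psi>')\<in>B.
        \<bar>j \<phi> \<psi> - j \<phi>' \<psi>'\<bar> \<le> L * nrm0 h (pf (\<lambda>s. \<phi> s - \<phi>' s) (\<lambda>s. \<psi> s - \<psi>' s))))"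

definition H1 where
  "H1 h Rm j \<longleftrightarrow> condS h Rm j \<and> condsLb h j \<and> (\<forall>(\<phi>,\<psi>)\<in>Uplus h. 0 \<le> j \<phi> \<psi>)
     \<and> (\<forall>B1 B2. B1 \<times> B2 \<subseteq> Uplus h \<and> (\<exists>M. \<forall>\<phi>\<in>B1. nrm1 h \<phi> \<le> M) \<longrightarrow>
          bounded ((\<lambda>(\<phi>,\<psi>). j \<phi> \<psi>) ` (B1 \<times> B2)))"

definition H2 where
  "H2 Rm q \<longleftrightarrow> (\<exists>M. \<forall>z\<in>{Rm<..}. \<bar>q z\<bar> \<le> M)
     \<and> (\<exists>q'. continuous_on {Rm<..} q' \<and> (\<forall>z\<in>{Rm<..}. (q has_real_derivative q' z) (at z)))"

definition is_solution where
  "is_solution h Rm q j \<mu> \<phi> \<psi> w v \<longleftrightarrow>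
     (\<exists>w'. continuous_on {-h..} w' \<and> (\<forall>t\<ge>-h. (w has_real_derivative w' t) (at t within {-h..})))
   \<and> (\<exists>v'. continuous_on {-h..} v' \<and> (\<forall>t\<ge>-h. (v has_real_derivative v' t) (at t within {-h..})))
   \<and> seg h w 0 = \<phi> \<and> seg h v 0 = \<psi>
   \<and> (\<forall>t\<ge>0. (seg h w t, seg h v t) \<in> UU h Rm)
   \<and> (\<forall>t>0. (w has_real_derivative q (v t) * w t) (at t)
          \<and> (v has_real_derivative j (seg h w t) (seg h v t) - \<mu> * v t) (at t))"

end

theory Submission
  imports Defs
begin

text \<open>Since q \<le> M, the population w grows at most like e^(Mt). Put A = L e^(Mh), where L comes
from (H9) for K = \<mu> z* + 1. While w \<ge> A, the window [t-h,t] sees w \<ge> L, so v' \<ge> 1 whenever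
v < z*: within time z* + 1 the variable v passes z* and stays there, after which q(v) \<le> -\<delta> makes
w decrease. Hence w cannot stay above A forever, and every later excursion above A, started at the
last visit of A, is bounded by A e^(M(z*+1)).\<close>

lemma DERIV_ge_imp_ge_linear:
  fixes f f' :: "real \<Rightarrow> real"
  assumes "a \<le> b" "continuous_on {a..b} f"
    and "\<And>t. a < t \<Longrightarrow> t < b \<Longrightarrow> (f has_real_derivative f' t) (at t)"
    and "\<And>t. a < t \<Longrightarrow> t < b \<Longrightarrow> c \<le> f' t"
  shows "f a + c * (b - a) \<le> f b"
proof -
  have "f a - c * a \<le> f b - c * b"
  proof (rule DERIV_nonneg_imp_increasing_open[OF \<open>a \<le> b\<close>])
    fix t assume "a < t" "t < b"
    show "\<exists>y. ((\<lambda>t. f t - c * t) has_real_derivative y) (at t) \<and> 0 \<le> y"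
      using assms(3,4)[OF \<open>a < t\<close> \<open>t < b\<close>] by (auto intro!: derivative_eq_intros)
  qed (intro continuous_intros assms(2))
  then show ?thesis by (simp add: algebra_simps)
qed

lemma DERIV_le_imp_le_linear:
  fixes f f' :: "real \<Rightarrow> real"
  assumes "a \<le> b" "continuous_on {a..b} f"
    and "\<And>t. a < t \<Longrightarrow> t < b \<Longrightarrow> (f has_real_derivative f' t) (at t)"
    and "\<And>t. a < t \<Longrightarrow> t < b \<Longrightarrow> f' t \<le> c"
  shows "f b \<le> f a + c * (b - a)"
proof -
  have "- f a + (- c) * (b - a) \<le> - f b"
    using assms by (intro DERIV_ge_imp_ge_linear[of a b _ "\<lambda>t. - f' t"])
      (auto intro: continuous_intros DERIV_minus)
  then show ?thesis by simp
qed

lemma DERIV_le_mult_imp_le_exp: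
  fixes f g :: "real \<Rightarrow> real"
  assumes "a \<le> b" "continuous_on {a..b} f"
    and "\<And>t. a < t \<Longrightarrow> t < b \<Longrightarrow> (f has_real_derivative g t * f t) (at t)"
    and "\<And>t. a < t \<Longrightarrow> t < b \<Longrightarrow> g t \<le> M" "\<And>t. a < t \<Longrightarrow> t < b \<Longrightarrow> 0 \<le> f t"
  shows "f b \<le> f a * exp (M * (b - a))"
proof -
  have "f b * exp (- M * b) \<le> f a * exp (- M * a)"
  proof (rule DERIV_nonpos_imp_decreasing_open[OF \<open>a \<le> b\<close>])
    fix t assume t: "a < t" "t < b"
    have "(g t - M) * f t * exp (- M * t) \<le> 0"
      using assms(4,5)[OF t] by (simp add: mult_nonpos_nonneg)
    with assms(3)[OF t] show "\<exists>y. ((\<lambda>t. f t * exp (- M * t)) has_real_derivative y) (at t) \<and> y \<le> 0"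
      by (auto intro!: derivative_eq_intros simp: algebra_simps)
  qed (intro continuous_intros assms(2))
  then have "f b * exp (- M * b) * exp (M * b) \<le> f a * exp (- M * a) * exp (M * b)"
    by (simp add: mult_right_mono)
  then show ?thesis by (simp add: mult.assoc exp_add[symmetric] algebra_simps)
qed

lemma last_time_le:
  fixes f :: "real \<Rightarrow> real"
  assumes "s \<le> t" "continuous_on {s..t} f" "f s \<le> c" "c < f t"
  shows "\<exists>a. s \<le> a \<and> a < t \<and> f a \<le> c \<and> (\<forall>r. a < r \<and> r \<le> t \<longrightarrow> c < f r)"
proof -
  define S where "S = {s..t} \<inter> f -` {..c}"
  have "closed S" unfolding S_def by (rule continuous_closed_preimage[OF assms(2)]) auto
  moreover have "S \<noteq> {}" "bdd_above S" using assms(1,3) unfolding S_def by auto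
  ultimately have "Sup S \<in> S" by (rule closed_contains_Sup[rotated -1])
  then have a: "s \<le> Sup S" "Sup S \<le> t" "f (Sup S) \<le> c" unfolding S_def by auto
  have "c < f r" if "Sup S < r" "r \<le> t" for r
    using that a cSup_upper[OF _ \<open>bdd_above S\<close>, of r] unfolding S_def by force
  moreover have "Sup S \<noteq> t" using a assms(4) by auto
  ultimately show ?thesis using a by (intro exI[of _ "Sup S"]) auto
qed

lemma DERIV_nonneg_below_imp_stays_above:
  fixes f f' :: "real \<Rightarrow> real"
  assumes "a \<le> b" "continuous_on {a..b} f"
    and "\<And>t. a < t \<Longrightarrow> t < b \<Longrightarrow> (f has_real_derivative f' t) (at t)"
    and "c \<le> f a" and "\<And>t. a < t \<Longrightarrow> t < b \<Longrightarrow> f t < c \<Longrightarrow> 0 \<le> f' t"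
  shows "c \<le> f b"
proof (rule ccontr)
  assume "\<not> c \<le> f b"
  moreover have "continuous_on {a..b} (\<lambda>t. - f t)" by (intro continuous_intros assms(2))
  ultimately obtain r where r: "a \<le> r" "r < b" "c \<le> f r"
    and below: "\<And>t. r < t \<Longrightarrow> t \<le> b \<Longrightarrow> f t < c"
    using last_time_le[of a b "\<lambda>t. - f t" "- c"] assms(1,4) by auto
  have "f r \<le> f b"
  proof (rule DERIV_nonneg_imp_increasing_open[of r b f])
    fix t assume "r < t" "t < b"
    then show "\<exists>y. (f has_real_derivative y) (at t) \<and> 0 \<le> y"
      using r below[of t] assms(3,5)[of t] by auto
  next
    show "continuous_on {r..b} f" using r by (intro continuous_on_subset[OF assms(2)]) auto
  qed (use r in simp)
  with r \<open>\<not> c \<le> f b\<close> show False by simp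
qed

text \<open>The cell FDE with the production term j(w_t, v_t) abstracted to a function J of time that
is only known to be large when w has been large during the past delay interval.\<close>

locale cell_feedback_system =
  fixes h M \<delta> zs \<mu> L :: real
    and q J w v :: "real \<Rightarrow> real"
  assumes h_pos: "0 < h" and M_nonneg: "0 \<le> M" and \<delta>_pos: "0 < \<delta>"
    and zs_nonneg: "0 \<le> zs" and \<mu>_nonneg: "0 \<le> \<mu>" and L_pos: "0 < L"
    and q_le_M: "\<And>z. 0 \<le> z \<Longrightarrow> q z \<le> M"
    and q_le_neg: "\<And>z. zs \<le> z \<Longrightarrow> q z \<le> - \<delta>"
    and w_nonneg: "\<And>t. 0 \<le> t \<Longrightarrow> 0 \<le> w t"
    and v_nonneg: "\<And>t. 0 \<le> t \<Longrightarrow> 0 \<le> v t"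
    and w_cont: "continuous_on {0..} w"
    and v_cont: "continuous_on {0..} v"
    and w_deriv: "\<And>t. 0 < t \<Longrightarrow> (w has_real_derivative q (v t) * w t) (at t)"
    and v_deriv: "\<And>t. 0 < t \<Longrightarrow> (v has_real_derivative J t - \<mu> * v t) (at t)"
    and J_large: "\<And>t. h \<le> t \<Longrightarrow> (\<And>r. t - h \<le> r \<Longrightarrow> r \<le> t \<Longrightarrow> L \<le> w r) \<Longrightarrow> \<mu> * zs + 1 \<le> J t"
begin

lemma w_growth:
  assumes "0 \<le> a" "a \<le> b"
  shows "w b \<le> w a * exp (M * (b - a))"
  using assms
  by (intro DERIV_le_mult_imp_le_exp[where g = "\<lambda>t. q (v t)"] continuous_on_subset[OF w_cont])
    (auto intro!: w_deriv q_le_M v_nonneg w_nonneg)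

lemma w_above_on_window:
  assumes "h \<le> r" "L * exp (M * h) \<le> w r" "r - h \<le> s" "s \<le> r"
  shows "L \<le> w s"
proof -
  have "L * exp (M * h) \<le> w s * exp (M * (r - s))"
    using assms h_pos w_growth[of s r] by auto
  also have "\<dots> \<le> w s * exp (M * h)"
    using assms h_pos M_nonneg w_nonneg[of s] by (intro mult_left_mono) (auto intro: mult_left_mono)
  finally show ?thesis by simp
qed

lemma v_deriv_ge_one:
  assumes "h \<le> r" "L * exp (M * h) \<le> w r" "v r < zs"
  shows "1 \<le> J r - \<mu> * v r"
proof -
  have "\<mu> * zs + 1 \<le> J r" using assms by (intro J_large w_above_on_window)
  moreover have "\<mu> * v r \<le> \<mu> * zs" using assms \<mu>_nonneg by (simp add: mult_left_mono)
  ultimately show ?thesis by linarith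
qed

lemma v_reaches_threshold:
  assumes "h \<le> a" and w_large: "\<And>r. a < r \<Longrightarrow> r < a + zs + 1 \<Longrightarrow> L * exp (M * h) \<le> w r"
  shows "\<exists>t\<in>{a..a + zs + 1}. zs \<le> v t"
proof (rule ccontr)
  assume "\<not> ?thesis"
  then have below: "\<And>t. a \<le> t \<Longrightarrow> t \<le> a + zs + 1 \<Longrightarrow> v t < zs" by force
  have "v a + 1 * (a + zs + 1 - a) \<le> v (a + zs + 1)"
  proof (rule DERIV_ge_imp_ge_linear[OF _ continuous_on_subset[OF v_cont]])
    fix t assume "a < t" "t < a + zs + 1"
    then show "(v has_real_derivative J t - \<mu> * v t) (at t)" "1 \<le> J t - \<mu> * v t"
      using assms h_pos below by (auto intro: v_deriv v_deriv_ge_one)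
  qed (use assms h_pos zs_nonneg in auto)
  then show False using below[of "a + zs + 1"] v_nonneg[of a] assms h_pos zs_nonneg by auto
qed

lemma v_stays_above_threshold:
  assumes "h \<le> a" "a \<le> b" "zs \<le> v a"
    and w_large: "\<And>r. a < r \<Longrightarrow> r < b \<Longrightarrow> L * exp (M * h) \<le> w r"
  shows "zs \<le> v b"
proof (rule DERIV_nonneg_below_imp_stays_above[OF _ continuous_on_subset[OF v_cont]])
  fix t assume "a < t" "t < b"
  then show "(v has_real_derivative J t - \<mu> * v t) (at t)"
    and "v t < zs \<Longrightarrow> 0 \<le> J t - \<mu> * v t"
    using assms h_pos v_deriv_ge_one[of t] by (auto intro: v_deriv)
qed (use assms h_pos in auto)

lemma w_nonincreasing_while_v_above:
  assumes "0 \<le> a" "a \<le> b" "\<And>r. a < r \<Longrightarrow> r < b \<Longrightarrow> zs \<le> v r"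
  shows "w b \<le> w a"
proof -
  have "w b \<le> w a + 0 * (b - a)"
  proof (rule DERIV_le_imp_le_linear[OF _ continuous_on_subset[OF w_cont]])
    fix r assume "a < r" "r < b"
    then show "(w has_real_derivative q (v r) * w r) (at r)" "q (v r) * w r \<le> 0"
      using assms \<delta>_pos q_le_neg[of "v r"] w_nonneg[of r]
      by (auto intro: w_deriv simp: mult_nonpos_nonneg)
  qed (use assms in auto)
  then show ?thesis by simp
qed

lemma w_eventually_below: "\<exists>s\<ge>h. w s < L * exp (M * h)"
proof (rule ccontr)
  define A where "A = L * exp (M * h)"
  define P where "P = h + zs + 1"
  assume "\<not> (\<exists>s\<ge>h. w s < L * exp (M * h))"
  then have w_large: "\<And>s. h \<le> s \<Longrightarrow> A \<le> w s" unfolding A_def by force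
  have v_above: "zs \<le> v t" if "P \<le> t" for t
  proof -
    obtain t1 where "h \<le> t1" "t1 \<le> P" "zs \<le> v t1"
      using v_reaches_threshold[of h] w_large unfolding A_def P_def by auto
    then show ?thesis
      using v_stays_above_threshold[of t1 t] w_large that unfolding A_def by auto
  qed
  have "0 < A" "h < P" using L_pos zs_nonneg unfolding A_def P_def by auto
  then have "0 < P" using h_pos by simp
  define b where "b = P + w P / (\<delta> * A) + 1"
  have "P \<le> b" unfolding b_def using w_nonneg[of P] \<open>0 < P\<close> \<open>0 < A\<close> \<delta>_pos by simp
  have "w b \<le> w P + (- \<delta> * A) * (b - P)"
  proof (rule DERIV_le_imp_le_linear[OF \<open>P \<le> b\<close> continuous_on_subset[OF w_cont]])
    fix t assume t: "P < t" "t < b"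
    then show "(w has_real_derivative q (v t) * w t) (at t)" using \<open>0 < P\<close> by (intro w_deriv) simp
    have "q (v t) * w t \<le> - \<delta> * w t"
      using t \<open>0 < P\<close> by (intro mult_right_mono q_le_neg v_above w_nonneg) auto
    also have "\<dots> \<le> - \<delta> * A" using t \<open>h < P\<close> \<delta>_pos w_large[of t] by simp
    finally show "q (v t) * w t \<le> - \<delta> * A" .
  qed (use \<open>0 < P\<close> in auto)
  also have "\<dots> = - \<delta> * A" unfolding b_def using \<delta>_pos \<open>0 < A\<close> by (simp add: field_simps)
  finally show False
    using w_nonneg[of b] \<open>P \<le> b\<close> \<open>0 < P\<close> mult_pos_pos[OF \<delta>_pos \<open>0 < A\<close>] by linarith
qed

lemma w_le_exp_bound:
  assumes "0 \<le> a" "w a \<le> B" "a \<le> r" "r \<le> a + d"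
  shows "w r \<le> B * exp (M * d)"
proof -
  have "w r \<le> w a * exp (M * (r - a))" using assms by (intro w_growth)
  also have "\<dots> \<le> B * exp (M * d)"
    using assms w_nonneg[of a] M_nonneg by (intro mult_mono) (auto intro: mult_left_mono)
  finally show ?thesis .
qed

lemma w_bounded_after_dip:
  assumes "h \<le> s" "w s \<le> L * exp (M * h)" "s \<le> t"
  shows "w t \<le> L * exp (M * h) * exp (M * (zs + 1))"
proof -
  define A where "A = L * exp (M * h)"
  show ?thesis
  proof (cases "w t \<le> A")
    case True
    then have "w t \<le> A * exp (M * (zs + 1))"
      using assms h_pos zs_nonneg by (intro w_le_exp_bound[of t]) auto
    then show ?thesis unfolding A_def .
  next
    case False
    then obtain a where a: "s \<le> a" "a < t" "w a \<le> A" and w_large: "\<And>r. a < r \<Longrightarrow> r \<le> t \<Longrightarrow> A < w r"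
      using last_time_le[of s t w A] assms h_pos continuous_on_subset[OF w_cont, of "{s..t}"]
      unfolding A_def by force
    show ?thesis
    proof (cases "t \<le> a + zs + 1")
      case True
      then have "w t \<le> A * exp (M * (zs + 1))"
        using a assms h_pos by (intro w_le_exp_bound[of a]) auto
      then show ?thesis unfolding A_def .
    next
      case False
      obtain t1 where t1: "a \<le> t1" "t1 \<le> a + zs + 1" "zs \<le> v t1"
        using v_reaches_threshold[of a] a assms False w_large unfolding A_def by force
      have "zs \<le> v r" if "t1 \<le> r" "r \<le> t" for r
        using that t1 a assms w_large[THEN less_imp_le] unfolding A_def
        by (intro v_stays_above_threshold[of t1 r]) auto
      then have "w t \<le> w t1"
        using t1 a assms h_pos False by (intro w_nonincreasing_while_v_above) auto
      also have "\<dots> \<le> A * exp (M * (zs + 1))"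
        using t1 a assms h_pos by (intro w_le_exp_bound[of a]) auto
      finally show ?thesis unfolding A_def .
    qed
  qed
qed

theorem w_eventually_bounded: "\<exists>tm. \<forall>t\<ge>tm. w t \<le> L * exp (M * h) * exp (M * (zs + 1))"
proof -
  obtain s where "h \<le> s" "w s < L * exp (M * h)" using w_eventually_below by blast
  then show ?thesis using w_bounded_after_dip by (intro exI[of _ s]) auto
qed

end

lemma is_solution_imp_cell_feedback_system:
  assumes "0 < h" "Rm < 0" "0 \<le> \<mu>" "0 < \<delta>" "0 \<le> zs" "0 < L"
    and q_bounded: "\<forall>z\<in>{Rm<..}. \<bar>q z\<bar> \<le> M" and q_neg: "\<forall>z\<ge>zs. q z \<le> - \<delta>"
    and j_large: "\<forall>(\<phi>,\<psi>)\<in>Uplus h. (\<forall>s\<in>{-h..0}. L \<le> \<phi> s) \<longrightarrow> \<mu> * zs + 1 \<le> j \<phi> \<psi>"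
    and sol: "is_solution h Rm q j \<mu> \<phi> \<psi> w v"
    and pos: "\<forall>t\<ge>0. (seg h w t, seg h v t) \<in> Uplus h"
  shows "cell_feedback_system h M \<delta> zs \<mu> L q (\<lambda>t. j (seg h w t) (seg h v t)) w v"
proof -
  have nonneg: "0 \<le> w t \<and> 0 \<le> v t" if "0 \<le> t" for t
  proof -
    have "0 \<le> seg h w t 0 \<and> 0 \<le> seg h v t 0"
      using pos that \<open>0 < h\<close> unfolding Uplus_def by auto
    then show ?thesis using \<open>0 < h\<close> unfolding seg_def by simp
  qed
  obtain w' v' where "\<forall>t\<ge>-h. (w has_real_derivative w' t) (at t within {-h..})"
    and "\<forall>t\<ge>-h. (v has_real_derivative v' t) (at t within {-h..})"
    using sol unfolding is_solution_def by blast
  then have "continuous_on {-h..} w" "continuous_on {-h..} v" by (auto intro: DERIV_continuous_on)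
  then have cont: "continuous_on {0..} w" "continuous_on {0..} v"
    using \<open>0 < h\<close> by (auto elim: continuous_on_subset)
  have j_window: "\<mu> * zs + 1 \<le> j (seg h w t) (seg h v t)"
    if "h \<le> t" "\<And>r. t - h \<le> r \<Longrightarrow> r \<le> t \<Longrightarrow> L \<le> w r" for t
  proof -
    have "\<forall>s\<in>{-h..0}. L \<le> seg h w t s" using that(2) unfolding seg_def by auto
    moreover have "(seg h w t, seg h v t) \<in> Uplus h" using pos that(1) \<open>0 < h\<close> by simp
    ultimately show ?thesis using j_large by fast
  qed
  have q_le_M: "q z \<le> M" if "0 \<le> z" for z
    using q_bounded[THEN bspec, of z] \<open>Rm < 0\<close> that by (simp add: abs_le_iff)
  have "0 \<le> M" using q_bounded \<open>Rm < 0\<close> by force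
  moreover have "\<And>t. 0 < t \<Longrightarrow> (w has_real_derivative q (v t) * w t) (at t)"
    and "\<And>t. 0 < t \<Longrightarrow> (v has_real_derivative j (seg h w t) (seg h v t) - \<mu> * v t) (at t)"
    using sol unfolding is_solution_def by auto
  ultimately show ?thesis using assms q_le_M nonneg cont j_window by unfold_locales auto
qed

theorem lemma16:
  fixes h Rm \<mu> :: real
    and q :: "real \<Rightarrow> real"
    and j :: "(real \<Rightarrow> real) \<Rightarrow> (real \<Rightarrow> real) \<Rightarrow> real"
  assumes "0 < h" and "Rm < 0" and "0 \<le> \<mu>"
    and "H1 h Rm j" and "H2 Rm q" and "Xplus h Rm q j \<mu> \<noteq> {}"
    and H8: "\<exists>\<delta>>0. \<exists>zs\<ge>0. \<forall>z\<ge>zs. q z \<le> - \<delta>"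
    and H9: "\<forall>K>0. \<exists>L. \<forall>(\<phi>,\<psi>)\<in>Uplus h. (\<forall>s\<in>{-h..0}. L \<le> \<phi> s) \<longrightarrow> K \<le> j \<phi> \<psi>"
  shows "\<exists>K2. \<forall>(\<phi>,\<psi>)\<in>Xplus h Rm q j \<mu>. \<forall>w v.
           is_solution h Rm q j \<mu> \<phi> \<psi> w v \<and> (\<forall>t\<ge>0. (seg h w t, seg h v t) \<in> Xplus h Rm q j \<mu>)
           \<longrightarrow> (\<exists>tm. \<forall>t\<ge>tm. w t \<le> K2)"
  \<comment> \<open>(H1), (H3) and the smoothness of q only serve existence of solutions.\<close>
proof -
  obtain M where M: "\<forall>z\<in>{Rm<..}. \<bar>q z\<bar> \<le> M" using \<open>H2 Rm q\<close> unfolding H2_def by blast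
  obtain \<delta> zs where "0 < \<delta>" "0 \<le> zs" and q_neg: "\<forall>z\<ge>zs. q z \<le> - \<delta>" using H8 by blast
  have "0 < \<mu> * zs + 1" using \<open>0 \<le> \<mu>\<close> \<open>0 \<le> zs\<close> by (simp add: add_nonneg_pos)
  then obtain L0 where L0: "\<forall>(\<phi>,\<psi>)\<in>Uplus h. (\<forall>s\<in>{-h..0}. L0 \<le> \<phi> s) \<longrightarrow> \<mu> * zs + 1 \<le> j \<phi> \<psi>"
    using H9 by blast
  define L where "L = max L0 1"
  have j_large: "\<forall>(\<phi>,\<psi>)\<in>Uplus h. (\<forall>s\<in>{-h..0}. L \<le> \<phi> s) \<longrightarrow> \<mu> * zs + 1 \<le> j \<phi> \<psi>"
    using L0 unfolding L_def by fastforce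
  show ?thesis
  proof (intro exI[of _ "L * exp (M * h) * exp (M * (zs + 1))"] ballI allI impI, clarify)
    fix \<phi> \<psi> w v
    assume "is_solution h Rm q j \<mu> \<phi> \<psi> w v" "\<forall>t\<ge>0. (seg h w t, seg h v t) \<in> Xplus h Rm q j \<mu>"
    then have "cell_feedback_system h M \<delta> zs \<mu> L q (\<lambda>t. j (seg h w t) (seg h v t)) w v"
      using assms(1-3) \<open>0 < \<delta>\<close> \<open>0 \<le> zs\<close> M q_neg j_large
      by (intro is_solution_imp_cell_feedback_system) (auto simp: L_def Xplus_def)
    then show "\<exists>tm. \<forall>t\<ge>tm. w t \<le> L * exp (M * h) * exp (M * (zs + 1))"
      by (rule cell_feedback_system.w_eventually_bounded)
  qed
qed

end
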